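(* Let $(X,d)$ be a compact metric space, $T:X\to X$ continuous, $Z\subset X$ non-empty, and $\Phi=\{\varphi_n:X\to\mathbb{R}\}_{n\in\mathbb{N}}$ a sequence of continuous functions satisfying the tempered distortion condition $\lim_{\varepsilon\to 0}\limsup_{n\to\infty}\varphi_n(\varepsilon)/n=0$, where $\varphi_n(\varepsilon)=\sup\{|\varphi_n(x)-\varphi_n(y)|: x\in X,\ y\in B_n(x,e^{-n\varepsilon})\}$. Then for every $\theta>0$ there exists $\varepsilon_0>0$ such that for every $0<\varepsilon<\varepsilon_0$ there exists $N_0\in\mathbb{N}$ such that for all $N\ge N_0$ and all $s\in\mathbb{R}$, $$\mathcal{M}^{s+\theta}_{N,\varepsilon/2}(Z,\Phi)\le W^s_{N,\varepsilon}(Z,\Phi)\le M^s_{N,\varepsilon}(Z,\Phi).$$ Consequently $P^{\tilde B}_Z(T,\Phi)=P^{\widetilde{WB}}_Z(T,\Phi)$.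
   Context: The neutralized Bowen ball is $B_n(x,e^{-n\varepsilon})=\{y\in X: d(T^jx,T^jy)<e^{-n\varepsilon}\ \forall\,0\le j\le n-1\}$. For $\varepsilon>0$, $N\in\mathbb{N}$, $s\in\mathbb{R}$: $M^s_{N,\varepsilon}(Z,\Phi)=\inf\sum_{i\in I}\exp[-n_is+\sup_{y\in B_{n_i}(x_i,e^{-n_i\varepsilon})}\varphi_{n_i}(y)]$, infimum over all finite or countable covers $\{B_{n_i}(x_i,e^{-n_i\varepsilon})\}_{i\in I}$ of $Z$ with $n_i\ge N$, $x_i\in X$; $M^s_\varepsilon=\lim_{N\to\infty}M^s_{N,\varepsilon}$; $M_\varepsilon(Z,\Phi)=\inf\{s:M^s_\varepsilon(Z,\Phi)=0\}=\sup\{s:M^s_\varepsilon(Z,\Phi)=\infty\}$; $P^{\tilde B}_Z(T,\Phi)=\lim_{\varepsilon\to0}M_\varepsilon(Z,\Phi)$. $\mathcal{M}^s_{N,\varepsilon}(Z,\Phi)=\inf\sum_{i\in I}\exp[-n_is+\varphi_{n_i}(x_i)]$, infimum over the same class of covers. Weighted version: $W^s_{N,\varepsilon}(Z,\Phi)=\inf\sum_{i\in I}c_i\exp[-n_is+\sup_{y\in B_{n_i}(x_i,e^{-n_i\varepsilon})}\varphi_{n_i}(y)]$, infimum over all finite or countable families $\{(B_{n_i}(x_i,e^{-n_i\varepsilon}),c_i)\}_{i\in I}$ with $0<c_i<\infty$, $x_i\in X$, $n_i\ge N$ and $\sum_ic_i\chi_{B_{n_i}(x_i,e^{-n_i\varepsilon})}\ge\chi_Z$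 ($\chi_A$ the indicator of $A$); $W^s_\varepsilon(Z,\Phi)=\lim_{N\to\infty}W^s_{N,\varepsilon}(Z,\Phi)$; $W_\varepsilon(Z,\Phi)=\inf\{s:W^s_\varepsilon(Z,\Phi)=0\}=\sup\{s:W^s_\varepsilon(Z,\Phi)=\infty\}$; $P^{\widetilde{WB}}_Z(T,\Phi)=\lim_{\varepsilon\to0}W_\varepsilon(Z,\Phi)$. *)

theory Defs
  imports "HOL-Analysis.Analysis"
begin

definition bowen :: "'a::metric_space set \<Rightarrow> ('a \<Rightarrow> 'a) \<Rightarrow> nat \<Rightarrow> 'a \<Rightarrow> real \<Rightarrow> 'a set" where
  "bowen X T n x r = {y \<in> X. \<forall>j<n. dist ((T ^^ j) x) ((T ^^ j) y) < r}"

definition nbowen :: "'a::metric_space set \<Rightarrow> ('a \<Rightarrow> 'a) \<Rightarrow> nat \<Rightarrow> 'a \<Rightarrow> real \<Rightarrow> 'a set" where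
  "nbowen X T n x eps = bowen X T n x (exp (- real n * eps))"

definition supball :: "'a::metric_space set \<Rightarrow> ('a \<Rightarrow> 'a) \<Rightarrow> (nat \<Rightarrow> 'a \<Rightarrow> real) \<Rightarrow> nat \<Rightarrow> 'a \<Rightarrow> real \<Rightarrow> real" where
  "supball X T \<phi> n x eps = (SUP y \<in> nbowen X T n x eps. \<phi> n y)"

definition distortion :: "'a::metric_space set \<Rightarrow> ('a \<Rightarrow> 'a) \<Rightarrow> (nat \<Rightarrow> 'a \<Rightarrow> real) \<Rightarrow> nat \<Rightarrow> real \<Rightarrow> real" where
  "distortion X T \<phi> n eps = (SUP x \<in> X. SUP y \<in> nbowen X T n x eps. \<bar>\<phi> n x - \<phi> n y\<bar>)"

text \<open>Covers are indexed by a set I of naturals (finite or countable), centres x i, times n i.\<close>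
definition Mcov :: "'a::metric_space set \<Rightarrow> ('a \<Rightarrow> 'a) \<Rightarrow> (nat \<Rightarrow> 'a \<Rightarrow> real) \<Rightarrow> 'a set \<Rightarrow> real \<Rightarrow> nat \<Rightarrow> real \<Rightarrow> ennreal" where
  "Mcov X T \<phi> Z s N eps =
    (INF (I, x, n) \<in> {(I :: nat set, x :: nat \<Rightarrow> 'a, n :: nat \<Rightarrow> nat).
         (\<forall>i\<in>I. x i \<in> X \<and> N \<le> n i) \<and> Z \<subseteq> (\<Union>i\<in>I. nbowen X T (n i) (x i) eps)}.
       (\<Sum>i. if i \<in> I then ennreal (exp (- real (n i) * s + supball X T \<phi> (n i) (x i) eps)) else 0))"

definition Mcalcov :: "'a::metric_space set \<Rightarrow> ('a \<Rightarrow> 'a) \<Rightarrow> (nat \<Rightarrow> 'a \<Rightarrow> real) \<Rightarrow> 'a set \<Rightarrow> real \<Rightarrow> nat \<Rightarrow> real \<Rightarrow> ennreal" where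
  "Mcalcov X T \<phi> Z s N eps =
    (INF (I, x, n) \<in> {(I :: nat set, x :: nat \<Rightarrow> 'a, n :: nat \<Rightarrow> nat).
         (\<forall>i\<in>I. x i \<in> X \<and> N \<le> n i) \<and> Z \<subseteq> (\<Union>i\<in>I. nbowen X T (n i) (x i) eps)}.
       (\<Sum>i. if i \<in> I then ennreal (exp (- real (n i) * s + \<phi> (n i) (x i))) else 0))"

definition Wcov :: "'a::metric_space set \<Rightarrow> ('a \<Rightarrow> 'a) \<Rightarrow> (nat \<Rightarrow> 'a \<Rightarrow> real) \<Rightarrow> 'a set \<Rightarrow> real \<Rightarrow> nat \<Rightarrow> real \<Rightarrow> ennreal" where
  "Wcov X T \<phi> Z s N eps =
    (INF (I, x, n, c) \<in> {(I :: nat set, x :: nat \<Rightarrow> 'a, n :: nat \<Rightarrow> nat, c :: nat \<Rightarrow> real).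
         (\<forall>i\<in>I. x i \<in> X \<and> N \<le> n i \<and> 0 < c i) \<and>
         (\<forall>z\<in>X. (if z \<in> Z then 1 else 0) \<le>
             (\<Sum>i. if i \<in> I \<and> z \<in> nbowen X T (n i) (x i) eps then ennreal (c i) else 0))}.
       (\<Sum>i. if i \<in> I then ennreal (c i) * ennreal (exp (- real (n i) * s + supball X T \<phi> (n i) (x i) eps)) else 0))"

definition Mlim where "Mlim X T \<phi> Z s eps = lim (\<lambda>N. Mcov X T \<phi> Z s N eps)"
definition Wlim where "Wlim X T \<phi> Z s eps = lim (\<lambda>N. Wcov X T \<phi> Z s N eps)"

definition Mcrit :: "'a::metric_space set \<Rightarrow> ('a \<Rightarrow> 'a) \<Rightarrow> (nat \<Rightarrow> 'a \<Rightarrow> real) \<Rightarrow> 'a set \<Rightarrow> real \<Rightarrow> ereal" where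
  "Mcrit X T \<phi> Z eps = Inf {ereal s | s. Mlim X T \<phi> Z s eps = 0}"
definition Wcrit :: "'a::metric_space set \<Rightarrow> ('a \<Rightarrow> 'a) \<Rightarrow> (nat \<Rightarrow> 'a \<Rightarrow> real) \<Rightarrow> 'a set \<Rightarrow> real \<Rightarrow> ereal" where
  "Wcrit X T \<phi> Z eps = Inf {ereal s | s. Wlim X T \<phi> Z s eps = 0}"

definition PB :: "'a::metric_space set \<Rightarrow> ('a \<Rightarrow> 'a) \<Rightarrow> (nat \<Rightarrow> 'a \<Rightarrow> real) \<Rightarrow> 'a set \<Rightarrow> ereal" where
  "PB X T \<phi> Z = Lim (at_right 0) (\<lambda>eps. Mcrit X T \<phi> Z eps)"
definition PWB :: "'a::metric_space set \<Rightarrow> ('a \<Rightarrow> 'a) \<Rightarrow> (nat \<Rightarrow> 'a \<Rightarrow> real) \<Rightarrow> 'a set \<Rightarrow> ereal" where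
  "PWB X T \<phi> Z = Lim (at_right 0) (\<lambda>eps. Wcrit X T \<phi> Z eps)"

end

(*
  Every cover is a weighted cover with unit weights, whence W <= M. Conversely, a weighted cover by
  neutralized Bowen balls of level at least N is traded for an ordinary cover by the balls with
  exponent eps/2 around the same centres: once e^(m eps/2) >= 3, a ball B_n(x, e^(-n eps)) meeting
  B_m(y, e^(-m eps)) with m <= n lies in B_m(y, e^(-m eps/2)). Federer's weighted Vitali argument
  (select disjoint balls greedily by increasing level, lower their weights by the least of them,
  repeat) bounds the cost of the new cover, with the potential evaluated at the centres, by the
  weighted cost, in which the potential is taken at its supremum over each ball. A countable family
  is cut into finite blocks with geometrically decreasing weight thresholds, so that all blocks but
  the first are negligible. This gives Mcalcov at eps/2 <= W, and Mcalcov only decreases as s grows.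
  Tempered distortion bounds M at exponent s + delta by Mcalcov at exponent s. Hence the critical
  exponents of M and W at eps lie between those of Mcalcov at eps/2 and at eps (up to delta); the
  latter are monotone in eps, so all of them converge to the same limit as eps -> 0.
*)

theory Submission
  imports Defs
begin

lemma exists_disjoint_subfamily_by_level:
  fixes B :: "'i \<Rightarrow> 'a set" and lev :: "'i \<Rightarrow> 'b::linorder"
  assumes "finite Q"
  obtains J where "J \<subseteq> Q" "disjoint_family_on B J"
    "\<And>i. i \<in> Q \<Longrightarrow> B i \<noteq> {} \<Longrightarrow> \<exists>j\<in>J. lev j \<le> lev i \<and> B i \<inter> B j \<noteq> {}"
proof -
  have "\<exists>J\<subseteq>Q. disjoint_family_on B J \<and>
      (\<forall>i\<in>Q. B i \<noteq> {} \<longrightarrow> (\<exists>j\<in>J. lev j \<le> lev i \<and> B i \<inter> B j \<noteq> {}))"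
    using assms
  proof (induction rule: finite_ranking_induct[where f = lev])
    case (insert a S)
    then obtain J where J: "J \<subseteq> S" "disjoint_family_on B J"
      "\<forall>i\<in>S. B i \<noteq> {} \<longrightarrow> (\<exists>j\<in>J. lev j \<le> lev i \<and> B i \<inter> B j \<noteq> {})"
      by blast
    show ?case
    proof (cases "B a = {} \<or> (\<exists>j\<in>J. B a \<inter> B j \<noteq> {})")
      case True
      then show ?thesis
        using J insert.hyps(2) by (intro exI[of _ J]) blast
    next
      case False
      then have "disjoint_family_on B (insert a J)"
        using J(2) by (auto simp: disjoint_family_on_def Int_commute)
      then show ?thesis
        using J(1,3) by (intro exI[of _ "insert a J"]) blast
    qed
  qed (simp add: disjoint_family_on_def)
  then show ?thesis
    using that by blast
qed

lemma sum_indicator_disjoint_family_le: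
  fixes a :: real
  assumes "disjoint_family_on B J" "finite J" "0 \<le> a"
  shows "(\<Sum>i\<in>J. if z \<in> B i then a else 0) \<le> a"
proof -
  have "card (J \<inter> {i. z \<in> B i}) \<le> 1"
    using assms(1,2) by (auto simp: card_le_Suc0_iff_eq disjoint_family_on_def)
  then have "a * card (J \<inter> {i. z \<in> B i}) \<le> a"
    using assms(3) by (simp add: mult_left_le)
  then show ?thesis
    using assms(2) by (simp add: sum.If_cases mult.commute)
qed

lemma finite_vitali_covering:
  fixes B E :: "'i \<Rightarrow> 'a set" and lev :: "'i \<Rightarrow> 'b::linorder"
  assumes "finite Q"
    and enlarge: "\<And>i j. i \<in> Q \<Longrightarrow> j \<in> Q \<Longrightarrow> lev j \<le> lev i \<Longrightarrow> B i \<inter> B j \<noteq> {} \<Longrightarrow> B i \<subseteq> E j"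
  obtains J where "J \<subseteq> Q" "disjoint_family_on B J" "(\<Union>i\<in>Q. B i) \<subseteq> (\<Union>j\<in>J. E j)"
proof -
  obtain J where J: "J \<subseteq> Q" "disjoint_family_on B J"
      "\<And>i. i \<in> Q \<Longrightarrow> B i \<noteq> {} \<Longrightarrow> \<exists>j\<in>J. lev j \<le> lev i \<and> B i \<inter> B j \<noteq> {}"
    using assms(1) by (rule exists_disjoint_subfamily_by_level[where B = B and lev = lev]) blast
  have "B i \<subseteq> (\<Union>j\<in>J. E j)" if i: "i \<in> Q" for i
  proof (cases "B i = {}")
    case False
    then obtain j where "j \<in> J" "lev j \<le> lev i" "B i \<inter> B j \<noteq> {}"
      using J(3) i by blast
    then show ?thesis
      using enlarge[OF i] J(1) by blast
  qed simp
  then show ?thesis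
    using that J(1,2) by blast
qed

lemma sum_if_mem_subset:
  "finite P \<Longrightarrow> J \<subseteq> P \<Longrightarrow> (\<Sum>i\<in>P. if i \<in> J then f i else 0) = sum f J"
  by (simp add: sum.If_cases Int_absorb1)

lemma lower_weights_on_disjoint_subfamily:
  fixes c w :: "'i \<Rightarrow> real"
  assumes "finite P" "J \<subseteq> P" "disjoint_family_on B J" "0 \<le> \<mu>"
  shows "(\<Sum>i\<in>P. (c i - (if i \<in> J then \<mu> else 0)) * w i) = (\<Sum>i\<in>P. c i * w i) - \<mu> * sum w J"
    and "(\<Sum>i\<in>P. if z \<in> B i then c i else 0) - \<mu>
      \<le> (\<Sum>i\<in>P. if z \<in> B i then c i - (if i \<in> J then \<mu> else 0) else 0)"
proof -
  have "(\<Sum>i\<in>P. (c i - (if i \<in> J then \<mu> else 0)) * w i)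
      = (\<Sum>i\<in>P. c i * w i) - (\<Sum>i\<in>P. if i \<in> J then \<mu> * w i else 0)"
    unfolding sum_subtractf[symmetric] by (rule sum.cong) (auto simp: left_diff_distrib)
  then show "(\<Sum>i\<in>P. (c i - (if i \<in> J then \<mu> else 0)) * w i) = (\<Sum>i\<in>P. c i * w i) - \<mu> * sum w J"
    using sum_if_mem_subset[OF assms(1,2), of "\<lambda>i. \<mu> * w i"] by (simp add: sum_distrib_left)
  have "(\<Sum>i\<in>P. if z \<in> B i then c i - (if i \<in> J then \<mu> else 0) else 0)
      = (\<Sum>i\<in>P. if z \<in> B i then c i else 0) - (\<Sum>i\<in>P. if i \<in> J then (if z \<in> B i then \<mu> else 0) else 0)"
    unfolding sum_subtractf[symmetric] by (rule sum.cong) auto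
  moreover have "(\<Sum>i\<in>P. if i \<in> J then (if z \<in> B i then \<mu> else 0) else 0) = (\<Sum>i\<in>J. if z \<in> B i then \<mu> else 0)"
    using assms(1,2) by (rule sum_if_mem_subset)
  moreover have "(\<Sum>i\<in>J. if z \<in> B i then \<mu> else 0) \<le> \<mu>"
    using assms(3) finite_subset[OF assms(2,1)] assms(4) by (rule sum_indicator_disjoint_family_le)
  ultimately show "(\<Sum>i\<in>P. if z \<in> B i then c i else 0) - \<mu>
      \<le> (\<Sum>i\<in>P. if z \<in> B i then c i - (if i \<in> J then \<mu> else 0) else 0)"
    by linarith
qed

lemma ex_mem_support_if_weight_pos:
  fixes c :: "'i \<Rightarrow> real"
  assumes "0 < (\<Sum>i\<in>P. if z \<in> B i then c i else 0)"
  shows "\<exists>i\<in>P. z \<in> B i \<and> 0 < c i"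
proof (rule ccontr)
  assume "\<not> ?thesis"
  then have "(\<Sum>i\<in>P. if z \<in> B i then c i else 0) \<le> 0"
    by (intro sum_nonpos) (auto simp: not_less)
  with assms show False
    by simp
qed

lemma finite_weighted_vitali:
  fixes B E :: "'i \<Rightarrow> 'a set" and lev :: "'i \<Rightarrow> 'b::linorder" and c w :: "'i \<Rightarrow> real"
  assumes enlarge: "\<And>i j. i \<in> P \<Longrightarrow> j \<in> P \<Longrightarrow> lev j \<le> lev i \<Longrightarrow> B i \<inter> B j \<noteq> {} \<Longrightarrow> B i \<subseteq> E j"
    and P: "finite P" and w: "\<And>i. i \<in> P \<Longrightarrow> 0 \<le> w i"
    and "\<And>i. i \<in> P \<Longrightarrow> 0 \<le> c i" and "0 < t"
    and "\<And>z. z \<in> K \<Longrightarrow> t \<le> (\<Sum>i\<in>P. if z \<in> B i then c i else 0)"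
  shows "\<exists>J\<subseteq>P. K \<subseteq> (\<Union>j\<in>J. E j) \<and> t * sum w J \<le> (\<Sum>i\<in>P. c i * w i)"
  using assms(4-6)
proof (induction "card {i\<in>P. 0 < c i}" arbitrary: c t rule: less_induct)
  case less
  have "finite {i\<in>P. 0 < c i}"
    using P by simp
  then obtain J1 where J1: "J1 \<subseteq> {i\<in>P. 0 < c i}" "disjoint_family_on B J1"
      "(\<Union>i\<in>{i\<in>P. 0 < c i}. B i) \<subseteq> (\<Union>j\<in>J1. E j)"
    by (rule finite_vitali_covering[where lev = lev and B = B and E = E]) (use enlarge in auto)
  have J1P: "J1 \<subseteq> P" and fin_J1: "finite J1"
    using J1(1) finite_subset[OF _ P] by auto
  have "K \<subseteq> (\<Union>i\<in>{i\<in>P. 0 < c i}. B i)"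
    using less.prems(2,3) ex_mem_support_if_weight_pos[where c = c] by (fastforce intro: less_le_trans)
  with J1(3) have cover_J1: "K \<subseteq> (\<Union>j\<in>J1. E j)"
    by blast
  show ?case
  proof (cases "\<forall>j\<in>J1. t \<le> c j")
    case True
    then have "t * sum w J1 \<le> (\<Sum>j\<in>J1. c j * w j)"
      using J1P w by (simp add: sum_distrib_left sum_mono mult_right_mono subset_eq)
    also have "\<dots> \<le> (\<Sum>i\<in>P. c i * w i)"
      using J1P P less.prems(1) w by (intro sum_mono2) auto
    finally show ?thesis
      using J1P cover_J1 by blast
  next
    case False
    then obtain j0 where j0: "j0 \<in> J1" "\<And>j. j \<in> J1 \<Longrightarrow> c j0 \<le> c j"
      using arg_min_if_finite[OF fin_J1, of c] by (metis empty_iff not_le)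
    define \<mu> where "\<mu> = c j0"
    have \<mu>_pos: "0 < \<mu>" and \<mu>_less: "\<mu> < t"
      using j0 J1(1) False unfolding \<mu>_def by (auto simp: not_le intro: le_less_trans)
    \<comment> \<open>Lowering the weights on the disjoint family J1 by their minimum \<mu> shrinks the support,
      and costs each point at most \<mu> of its total weight.\<close>
    define c' where "c' i = c i - (if i \<in> J1 then \<mu> else 0)" for i
    have "{i\<in>P. 0 < c' i} \<subset> {i\<in>P. 0 < c i}"
      using \<mu>_pos j0 J1(1) unfolding c'_def \<mu>_def by force
    then have card_less: "card {i\<in>P. 0 < c' i} < card {i\<in>P. 0 < c i}"
      using P by (intro psubset_card_mono) auto
    have "0 \<le> c' i" if "i \<in> P" for i
      using less.prems(1)[OF that] j0(2) unfolding c'_def \<mu>_def by auto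
    moreover have "t - \<mu> \<le> (\<Sum>i\<in>P. if z \<in> B i then c' i else 0)" if "z \<in> K" for z
      using less.prems(3)[OF that] lower_weights_on_disjoint_subfamily(2)[OF P J1P J1(2) less_imp_le[OF \<mu>_pos], of z c]
      unfolding c'_def by linarith
    ultimately obtain J' where J': "J' \<subseteq> P" "K \<subseteq> (\<Union>j\<in>J'. E j)"
        "(t - \<mu>) * sum w J' \<le> (\<Sum>i\<in>P. c' i * w i)"
      using less.hyps[OF card_less, of "t - \<mu>"] \<mu>_less by auto
    then have J'_bound: "\<mu> * sum w J1 + (t - \<mu>) * sum w J' \<le> (\<Sum>i\<in>P. c i * w i)"
      using lower_weights_on_disjoint_subfamily(1)[OF P J1P J1(2) less_imp_le[OF \<mu>_pos], of c w]
      unfolding c'_def by linarith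
    \<comment> \<open>The cheaper of the two covers J1, J' does the job, since t = \<mu> + (t - \<mu>)\<close>
    obtain J where J: "J \<in> {J1, J'}" "sum w J = min (sum w J1) (sum w J')"
      by (metis insertCI min_def)
    have "t * sum w J = \<mu> * sum w J + (t - \<mu>) * sum w J"
      by (simp add: algebra_simps)
    also have "\<dots> \<le> \<mu> * sum w J1 + (t - \<mu>) * sum w J'"
      using J(2) \<mu>_pos \<mu>_less by (intro add_mono mult_left_mono) auto
    finally show ?thesis
      using J(1) J'_bound J1P cover_J1 J'(1,2) by auto
  qed
qed

lemma sums_chunks:
  fixes f :: "nat \<Rightarrow> 'a::{t2_space, topological_comm_monoid_add}"
  assumes "f sums s" "strict_mono L" "L 0 = 0"
  shows "(\<lambda>k. \<Sum>i\<in>{L k..<L (Suc k)}. f i) sums s"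
proof -
  have partial: "(\<Sum>k<n. \<Sum>i\<in>{L k..<L (Suc k)}. f i) = (\<Sum>i<L n. f i)" for n
  proof (induction n)
    case (Suc n)
    have "L n \<le> L (Suc n)"
      using assms(2) by (simp add: strict_mono_less_eq)
    then have "(\<Sum>i<L (Suc n). f i) = (\<Sum>i<L n. f i) + (\<Sum>i\<in>{L n..<L (Suc n)}. f i)"
      using sum.atLeastLessThan_concat[of 0 "L n" "L (Suc n)" f] by (simp add: atLeast0LessThan)
    then show ?case
      using Suc.IH by simp
  qed (simp add: assms(3))
  have "(\<lambda>n. \<Sum>i<L n. f i) \<longlonglongrightarrow> s"
    using LIMSEQ_subseq_LIMSEQ[OF assms(1)[unfolded sums_def] assms(2)] by (simp add: comp_def)
  then show ?thesis
    unfolding sums_def partial .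
qed

lemma suminf_ennreal_chunks:
  fixes f :: "nat \<Rightarrow> ennreal"
  assumes "strict_mono L" "L 0 = 0"
  shows "(\<Sum>i. f i) = (\<Sum>k. \<Sum>i\<in>{L k..<L (Suc k)}. f i)"
  using sums_chunks[OF summable_sums[OF summableI] assms] by (rule sums_unique)

lemma chunks_disjoint:
  assumes "strict_mono L" "i \<in> {L k..<L (Suc k)}" "i \<in> {L k'..<L (Suc k')}"
  shows "k = k'"
proof (rule ccontr)
  assume "k \<noteq> k'"
  then have "Suc k \<le> k' \<or> Suc k' \<le> k"
    by linarith
  then have "L (Suc k) \<le> L k' \<or> L (Suc k') \<le> L k"
    using assms(1) by (auto simp: strict_mono_less_eq)
  then show False
    using assms(2,3) by auto
qed

lemma suminf_ennreal_union_chunks: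
  fixes w :: "nat \<Rightarrow> ennreal"
  assumes "strict_mono L" "L 0 = 0" "\<And>k. J k \<subseteq> {L k..<L (Suc k)}"
  shows "(\<Sum>i. if i \<in> (\<Union>k. J k) then w i else 0) = (\<Sum>k. \<Sum>i\<in>J k. w i)"
proof -
  have "(\<Sum>i\<in>{L k..<L (Suc k)}. if i \<in> (\<Union>k. J k) then w i else 0) = (\<Sum>i\<in>J k. w i)" for k
  proof -
    have chunk: "{L k..<L (Suc k)} \<inter> (\<Union>k. J k) = J k"
      using assms(3) chunks_disjoint[OF assms(1)] by blast
    show ?thesis
      by (simp only: sum.inter_restrict[OF finite_atLeastLessThan, symmetric] chunk)
  qed
  then show ?thesis
    by (subst suminf_ennreal_chunks[OF assms(1,2)]) simp
qed

lemma exists_chunks_with_small_sums: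
  fixes f :: "nat \<Rightarrow> 'a::banach" and r :: "nat \<Rightarrow> real"
  assumes "summable f" "\<And>k. 0 < r k"
  obtains L where "strict_mono L" "L 0 = 0"
    "\<And>k. 0 < k \<Longrightarrow> norm (\<Sum>i\<in>{L k..<L (Suc k)}. f i) < r k"
proof -
  have "\<forall>k. \<exists>N. \<forall>m\<ge>N. \<forall>n. norm (sum f {m..<n}) < r k"
    using assms summable_Cauchy by blast
  then obtain g where g: "\<And>k m n. g k \<le> m \<Longrightarrow> norm (sum f {m..<n}) < r k"
    by metis
  define L where "L k = (\<Sum>j<k. Suc (g (Suc j)))" for k
  have L_ge: "g k \<le> L k" if "0 < k" for k
    using that by (cases k) (auto simp: L_def)
  show ?thesis
  proof (rule that)
    show "strict_mono L"
      unfolding L_def by (rule strict_monoI_Suc) simp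
    show "L 0 = 0"
      by (simp add: L_def)
    show "norm (\<Sum>i\<in>{L k..<L (Suc k)}. f i) < r k" if "0 < k" for k
      using g[OF L_ge[OF that]] .
  qed
qed

lemma exists_heavy_chunk:
  fixes h \<beta> :: "nat \<Rightarrow> real"
  assumes "\<And>i. 0 \<le> h i" "1 \<le> (\<Sum>i. ennreal (h i))" "strict_mono L" "L 0 = 0"
    and "\<beta> sums b" "b < 1"
  shows "\<exists>k. \<beta> k \<le> (\<Sum>i\<in>{L k..<L (Suc k)}. h i)"
proof (rule ccontr)
  assume "\<not> ?thesis"
  then have light: "(\<Sum>i\<in>{L k..<L (Suc k)}. h i) < \<beta> k" for k
    by (simp add: not_le)
  have "(\<Sum>i. ennreal (h i)) = (\<Sum>k. ennreal (\<Sum>i\<in>{L k..<L (Suc k)}. h i))"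
    using suminf_ennreal_chunks[OF assms(3,4), of "\<lambda>i. ennreal (h i)"] by (simp add: sum_ennreal assms(1))
  also have "\<dots> \<le> (\<Sum>k. ennreal (\<beta> k))"
    using light by (intro suminf_le ennreal_leI less_imp_le) auto
  also have "\<dots> = ennreal b"
  proof (rule suminf_ennreal_eq)
    show "0 \<le> \<beta> k" for k
      using light[of k] sum_nonneg[of "{L k..<L (Suc k)}" h] assms(1) by fastforce
  qed (fact assms(5))
  finally show False
    using assms(2,6) by (meson ennreal_less_one_iff not_le order_trans)
qed

lemma suminf_ennreal_le_head_plus_geometric:
  fixes a :: "nat \<Rightarrow> real"
  assumes "a 0 \<le> A" "\<And>k. 0 < k \<Longrightarrow> a k \<le> \<gamma> * (1 / 2) ^ Suc k" "0 \<le> A" "0 \<le> \<gamma>"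
  shows "(\<Sum>k. ennreal (a k)) \<le> ennreal (A + \<gamma>)"
proof -
  have "(\<Sum>k. ennreal (a k)) \<le> (\<Sum>k. ennreal ((if k = 0 then A else 0) + \<gamma> * (1 / 2) ^ Suc k))"
    using assms by (intro suminf_le ennreal_leI summableI) (auto intro: add_increasing2)
  also have "\<dots> = ennreal (A + \<gamma>)"
  proof (rule suminf_ennreal_eq)
    show "0 \<le> (if k = 0 then A else 0) + \<gamma> * (1 / 2) ^ Suc k" for k
      using assms(3,4) by simp
    show "(\<lambda>k. (if k = 0 then A else 0) + \<gamma> * (1 / 2) ^ Suc k) sums (A + \<gamma>)"
      using sums_add[OF sums_single[of 0 "\<lambda>_. A"] sums_mult[OF power_half_series, of \<gamma>]] by simp
  qed
  finally show ?thesis .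
qed

lemma chunkwise_weighted_vitali:
  fixes B E :: "nat \<Rightarrow> 'a set" and lev :: "nat \<Rightarrow> 'b::linorder" and c w \<beta> :: "nat \<Rightarrow> real"
  assumes enlarge: "\<And>i j. i \<in> I \<Longrightarrow> j \<in> I \<Longrightarrow> lev j \<le> lev i \<Longrightarrow> B i \<inter> B j \<noteq> {} \<Longrightarrow> B i \<subseteq> E j"
    and w: "\<And>i. i \<in> I \<Longrightarrow> 0 \<le> w i" and c: "\<And>i. i \<in> I \<Longrightarrow> 0 \<le> c i"
    and weight: "\<And>z. z \<in> K \<Longrightarrow> 1 \<le> (\<Sum>i. if i \<in> I \<and> z \<in> B i then ennreal (c i) else 0)"
    and L: "strict_mono L" "L 0 = 0"
    and \<beta>: "\<And>k. 0 < \<beta> k" "\<beta> sums b" "b < 1"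
  obtains J where "\<And>k. J k \<subseteq> {L k..<L (Suc k)} \<inter> I" "K \<subseteq> (\<Union>k. \<Union>j\<in>J k. E j)"
    "\<And>k. \<beta> k * sum w (J k) \<le> (\<Sum>i\<in>{L k..<L (Suc k)} \<inter> I. c i * w i)"
proof -
  define P where "P k = {L k..<L (Suc k)} \<inter> I" for k
  define K' where "K' k = {z \<in> K. \<beta> k \<le> (\<Sum>i\<in>P k. if z \<in> B i then c i else 0)}" for k
  have K_cover: "K \<subseteq> (\<Union>k. K' k)"
  proof
    fix z assume z: "z \<in> K"
    define h where "h i = (if i \<in> I \<and> z \<in> B i then c i else 0)" for i
    have "\<exists>k. \<beta> k \<le> (\<Sum>i\<in>{L k..<L (Suc k)}. h i)"
    proof (rule exists_heavy_chunk[OF _ _ L \<beta>(2,3)])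
      show "0 \<le> h i" for i
        using c by (simp add: h_def)
      have "(\<lambda>i. ennreal (h i)) = (\<lambda>i. if i \<in> I \<and> z \<in> B i then ennreal (c i) else 0)"
        by (simp add: h_def fun_eq_iff)
      then show "1 \<le> (\<Sum>i. ennreal (h i))"
        using weight[OF z] by simp
    qed
    moreover have "(\<Sum>i\<in>{L k..<L (Suc k)}. h i) = (\<Sum>i\<in>P k. if z \<in> B i then c i else 0)" for k
      unfolding P_def h_def sum.inter_restrict[OF finite_atLeastLessThan] by (rule sum.cong) auto
    ultimately show "z \<in> (\<Union>k. K' k)"
      using z unfolding K'_def by auto
  qed
  have "\<exists>J\<subseteq>P k. K' k \<subseteq> (\<Union>j\<in>J. E j) \<and> \<beta> k * sum w J \<le> (\<Sum>i\<in>P k. c i * w i)" for k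
  proof (rule finite_weighted_vitali[where lev = lev and B = B])
    show "B i \<subseteq> E j" if "i \<in> P k" "j \<in> P k" "lev j \<le> lev i" "B i \<inter> B j \<noteq> {}" for i j
      using enlarge that by (auto simp: P_def)
  qed (use w c \<beta>(1) in \<open>auto simp: P_def K'_def\<close>)
  then obtain J where J: "\<And>k. J k \<subseteq> P k" "\<And>k. K' k \<subseteq> (\<Union>j\<in>J k. E j)"
      "\<And>k. \<beta> k * sum w (J k) \<le> (\<Sum>i\<in>P k. c i * w i)"
    by metis
  show ?thesis
  proof (rule that)
    show "J k \<subseteq> {L k..<L (Suc k)} \<inter> I" for k
      using J(1) unfolding P_def .
    show "K \<subseteq> (\<Union>k. \<Union>j\<in>J k. E j)"
    proof
      fix z assume "z \<in> K"
      then obtain k where "z \<in> K' k"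
        using K_cover by blast
      then obtain j where "j \<in> J k" "z \<in> E j"
        using J(2) by blast
      then show "z \<in> (\<Union>k. \<Union>j\<in>J k. E j)"
        by blast
    qed
    show "\<beta> k * sum w (J k) \<le> (\<Sum>i\<in>{L k..<L (Suc k)} \<inter> I. c i * w i)" for k
      using J(3) unfolding P_def .
  qed
qed

lemma countable_weighted_vitali_approx:
  fixes B E :: "nat \<Rightarrow> 'a set" and lev :: "nat \<Rightarrow> 'b::linorder" and c w :: "nat \<Rightarrow> real"
  assumes enlarge: "\<And>i j. i \<in> I \<Longrightarrow> j \<in> I \<Longrightarrow> lev j \<le> lev i \<Longrightarrow> B i \<inter> B j \<noteq> {} \<Longrightarrow> B i \<subseteq> E j"
    and w: "\<And>i. i \<in> I \<Longrightarrow> 0 \<le> w i" and c: "\<And>i. i \<in> I \<Longrightarrow> 0 \<le> c i"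
    and weight: "\<And>z. z \<in> K \<Longrightarrow> 1 \<le> (\<Sum>i. if i \<in> I \<and> z \<in> B i then ennreal (c i) else 0)"
    and S: "(\<lambda>i. if i \<in> I then c i * w i else 0) sums S"
    and \<gamma>: "0 < \<gamma>" "\<gamma> < 1"
  obtains J where "J \<subseteq> I" "K \<subseteq> (\<Union>j\<in>J. E j)"
    "(\<Sum>i. if i \<in> J then ennreal (w i) else 0) \<le> ennreal (S / (1 - \<gamma>)\<^sup>2 + \<gamma>)"
proof -
  define f where "f = (\<lambda>i. if i \<in> I then c i * w i else 0)"
  have f_nonneg: "0 \<le> f i" for i
    using c w by (simp add: f_def)
  have f_sums: "f sums S"
    using S by (simp add: f_def)
  \<comment> \<open>The thresholds \<beta> k sum to 1 - \<gamma> < 1, so each point of K is \<beta> k-heavy in some chunk k.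
    Chunk 0 then costs at most S / \<beta> 0, and every later chunk is chosen so light that it costs
    at most \<gamma> / 2 ^ Suc k.\<close>
  define \<beta> where "\<beta> k = (1 - \<gamma>)\<^sup>2 * \<gamma> ^ k" for k :: nat
  have \<beta>_pos: "0 < \<beta> k" for k
    using \<gamma> by (simp add: \<beta>_def)
  have \<beta>_sums: "\<beta> sums (1 - \<gamma>)"
  proof -
    have "\<beta> sums ((1 - \<gamma>)\<^sup>2 * (1 / (1 - \<gamma>)))"
      unfolding \<beta>_def using \<gamma> by (intro sums_mult geometric_sums) simp
    then show ?thesis
      using \<gamma> by (simp add: power2_eq_square)
  qed
  obtain L where L: "strict_mono L" "L 0 = 0"
    and L_small: "\<And>k. 0 < k \<Longrightarrow> norm (\<Sum>i\<in>{L k..<L (Suc k)}. f i) < \<beta> k * \<gamma> / 2 ^ Suc k"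
    using exists_chunks_with_small_sums[OF sums_summable[OF f_sums], of "\<lambda>k. \<beta> k * \<gamma> / 2 ^ Suc k"]
      \<beta>_pos \<gamma> by auto
  obtain J where J: "\<And>k. J k \<subseteq> {L k..<L (Suc k)} \<inter> I" "K \<subseteq> (\<Union>k. \<Union>j\<in>J k. E j)"
      "\<And>k. \<beta> k * sum w (J k) \<le> (\<Sum>i\<in>{L k..<L (Suc k)} \<inter> I. c i * w i)"
    by (rule chunkwise_weighted_vitali[where lev = lev and B = B and E = E and K = K,
          OF enlarge w c weight L \<beta>_pos \<beta>_sums]) (use \<gamma> in auto)
  have sum_chunk: "(\<Sum>i\<in>{L k..<L (Suc k)} \<inter> I. c i * w i) = (\<Sum>i\<in>{L k..<L (Suc k)}. f i)" for k
    unfolding f_def by (simp only: sum.inter_restrict[OF finite_atLeastLessThan])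
  have J_le: "sum w (J k) \<le> (\<Sum>i\<in>{L k..<L (Suc k)}. f i) / \<beta> k" for k
    using J(3)[of k] \<beta>_pos[of k] by (simp add: sum_chunk pos_le_divide_eq mult.commute)
  have S_nonneg: "0 \<le> S"
    using sums_le[OF _ sums_zero f_sums] f_nonneg by simp
  have "sum w (J 0) \<le> S / \<beta> 0"
  proof -
    have "(\<Sum>i\<in>{L 0..<L (Suc 0)}. f i) \<le> S"
      using f_nonneg sum_le_suminf[OF sums_summable[OF f_sums]] sums_unique[OF f_sums] by auto
    then show ?thesis
      using J_le[of 0] \<beta>_pos[of 0] by (meson divide_right_mono less_imp_le order_trans)
  qed
  moreover have "sum w (J k) \<le> \<gamma> * (1 / 2) ^ Suc k" if "0 < k" for k
  proof -
    have "(\<Sum>i\<in>{L k..<L (Suc k)}. f i) / \<beta> k < \<gamma> / 2 ^ Suc k"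
      using L_small[OF that] \<beta>_pos[of k] by (simp add: divide_less_eq mult.commute)
    then show ?thesis
      using J_le[of k] by (simp add: power_one_over)
  qed
  ultimately have sum_J: "(\<Sum>k. ennreal (sum w (J k))) \<le> ennreal (S / \<beta> 0 + \<gamma>)"
    using S_nonneg \<beta>_pos[of 0] \<gamma> by (intro suminf_ennreal_le_head_plus_geometric) auto
  show ?thesis
  proof (rule that)
    show "(\<Union>k. J k) \<subseteq> I"
      using J(1) by auto
    show "K \<subseteq> (\<Union>j\<in>(\<Union>k. J k). E j)"
      using J(2) by blast
    have "(\<Sum>i. if i \<in> (\<Union>k. J k) then ennreal (w i) else 0) = (\<Sum>k. \<Sum>i\<in>J k. ennreal (w i))"
      by (rule suminf_ennreal_union_chunks[OF L]) (use J(1) in auto)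
    also have "\<dots> = (\<Sum>k. ennreal (sum w (J k)))"
      using J(1) w by (subst sum_ennreal) auto
    finally show "(\<Sum>i. if i \<in> (\<Union>k. J k) then ennreal (w i) else 0) \<le> ennreal (S / (1 - \<gamma>)\<^sup>2 + \<gamma>)"
      using sum_J by (simp add: \<beta>_def)
  qed
qed

lemma countable_weighted_vitali:
  fixes B E :: "nat \<Rightarrow> 'a set" and lev :: "nat \<Rightarrow> 'b::linorder" and c w :: "nat \<Rightarrow> real"
  assumes enlarge: "\<And>i j. i \<in> I \<Longrightarrow> j \<in> I \<Longrightarrow> lev j \<le> lev i \<Longrightarrow> B i \<inter> B j \<noteq> {} \<Longrightarrow> B i \<subseteq> E j"
    and w: "\<And>i. i \<in> I \<Longrightarrow> 0 \<le> w i" and c: "\<And>i. i \<in> I \<Longrightarrow> 0 \<le> c i"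
    and weight: "\<And>z. z \<in> K \<Longrightarrow> 1 \<le> (\<Sum>i. if i \<in> I \<and> z \<in> B i then ennreal (c i) else 0)"
  shows "(INF J\<in>{J. J \<subseteq> I \<and> K \<subseteq> (\<Union>j\<in>J. E j)}. \<Sum>i. if i \<in> J then ennreal (w i) else 0)
    \<le> (\<Sum>i. if i \<in> I then ennreal (c i * w i) else 0)"
    (is "?inf \<le> ?S")
proof (cases "?S = top")
  case False
  define f where "f = (\<lambda>i. if i \<in> I then c i * w i else 0)"
  have f_nonneg: "0 \<le> f i" for i
    using c w by (simp add: f_def)
  have S_eq: "?S = (\<Sum>i. ennreal (f i))"
    by (intro suminf_cong) (simp add: f_def)
  with False have "summable f"
    using f_nonneg by (simp add: summable_suminf_not_top)
  then have f_sums: "(\<lambda>i. if i \<in> I then c i * w i else 0) sums (suminf f)"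
    unfolding f_def by (rule summable_sums)
  have "\<forall>\<^sub>F \<gamma> in at_right 0. ?inf \<le> ennreal (suminf f / (1 - \<gamma>)\<^sup>2 + \<gamma>)"
  proof (rule eventually_at_rightI[of 0 1])
    fix \<gamma> :: real assume "\<gamma> \<in> {0<..<1}"
    then obtain J where "J \<subseteq> I" "K \<subseteq> (\<Union>j\<in>J. E j)"
      "(\<Sum>i. if i \<in> J then ennreal (w i) else 0) \<le> ennreal (suminf f / (1 - \<gamma>)\<^sup>2 + \<gamma>)"
      using countable_weighted_vitali_approx[where lev = lev and B = B and E = E and K = K,
          OF enlarge w c weight f_sums] by auto
    then show "?inf \<le> ennreal (suminf f / (1 - \<gamma>)\<^sup>2 + \<gamma>)"
      by (intro INF_lower2) auto
  qed simp
  moreover have "((\<lambda>\<gamma>. ennreal (suminf f / (1 - \<gamma>)\<^sup>2 + \<gamma>)) \<longlongrightarrow> ennreal (suminf f)) (at_right 0)"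
  proof (rule tendsto_ennrealI)
    have "((\<lambda>\<gamma>::real. suminf f / (1 - \<gamma>)\<^sup>2 + \<gamma>) \<longlongrightarrow> suminf f / (1 - 0)\<^sup>2 + 0) (at_right 0)"
      by (intro tendsto_intros) auto
    then show "((\<lambda>\<gamma>. suminf f / (1 - \<gamma>)\<^sup>2 + \<gamma>) \<longlongrightarrow> suminf f) (at_right 0)"
      by simp
  qed
  ultimately have "?inf \<le> ennreal (suminf f)"
    by (intro tendsto_le[OF trivial_limit_at_right_real _ tendsto_const]) auto
  also have "\<dots> = ?S"
    using S_eq suminf_ennreal2[OF f_nonneg \<open>summable f\<close>] by simp
  finally show ?thesis .
qed simp

lemma bowen_subset: "bowen X T n x r \<subseteq> X"
  by (auto simp: bowen_def)

lemma nbowen_subset: "nbowen X T n x eps \<subseteq> X"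
  by (simp add: nbowen_def bowen_subset)

lemma center_in_nbowen: "x \<in> X \<Longrightarrow> x \<in> nbowen X T n x eps"
  by (simp add: nbowen_def bowen_def)

lemma bowen_mono_radius: "r \<le> r' \<Longrightarrow> bowen X T n x r \<subseteq> bowen X T n x r'"
  by (auto simp: bowen_def)

lemma nbowen_antimono_eps: "eps' \<le> eps \<Longrightarrow> nbowen X T n x eps \<subseteq> nbowen X T n x eps'"
  unfolding nbowen_def by (rule bowen_mono_radius) (simp add: mult_left_mono)

lemma bowen_subset_enlarged:
  assumes "m \<le> n" "bowen X T n x r' \<inter> bowen X T m y r \<noteq> {}"
  shows "bowen X T n x r' \<subseteq> bowen X T m y (r + 2 * r')"
proof
  fix z assume z: "z \<in> bowen X T n x r'"
  obtain u where u: "u \<in> bowen X T n x r'" "u \<in> bowen X T m y r"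
    using assms(2) by blast
  have "dist ((T ^^ j) y) ((T ^^ j) z) < r + 2 * r'" if "j < m" for j
  proof -
    have "dist ((T ^^ j) y) ((T ^^ j) z)
        \<le> dist ((T ^^ j) y) ((T ^^ j) u) + dist ((T ^^ j) x) ((T ^^ j) u) + dist ((T ^^ j) x) ((T ^^ j) z)"
      by (metis add.commute add_le_cancel_left dist_commute dist_triangle dist_triangle_le)
    moreover have "j < n"
      using that assms(1) by linarith
    ultimately show ?thesis
      using that u z by (fastforce simp: bowen_def)
  qed
  then show "z \<in> bowen X T m y (r + 2 * r')"
    using z by (simp add: bowen_def)
qed

lemma nbowen_subset_half:
  assumes "0 \<le> eps" "2 * ln 3 \<le> real m * eps" "m \<le> n"
    and "nbowen X T n x eps \<inter> nbowen X T m y eps \<noteq> {}"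
  shows "nbowen X T n x eps \<subseteq> nbowen X T m y (eps / 2)"
proof -
  define u where "u = exp (- real m * eps / 2)"
  define r where "r = exp (- real m * eps)"
  have "exp (- real n * eps) \<le> r"
    using assms(1,3) by (simp add: r_def mult_right_mono)
  moreover have "3 * r \<le> u"
  proof -
    have "3 \<le> exp (real m * eps / 2)"
      using assms(2) exp_le_cancel_iff[of "ln 3" "real m * eps / 2"] by simp
    then have "3 * u \<le> 1"
      by (simp add: u_def exp_minus field_simps)
    moreover have "r = u * u"
      unfolding r_def u_def mult_exp_exp by simp
    ultimately show ?thesis
      by (simp add: u_def mult_left_le mult.assoc[symmetric])
  qed
  ultimately have "r + 2 * exp (- real n * eps) \<le> exp (- real m * (eps / 2))"
    by (simp add: u_def)
  moreover have "nbowen X T n x eps \<subseteq> bowen X T m y (r + 2 * exp (- real n * eps))"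
    using assms(3,4) unfolding nbowen_def r_def by (rule bowen_subset_enlarged)
  ultimately show ?thesis
    unfolding nbowen_def by (meson bowen_mono_radius order_trans)
qed

lemma bdd_on_compact:
  fixes f :: "'a::metric_space \<Rightarrow> real"
  assumes "compact X" "continuous_on X f"
  obtains M where "\<And>y. y \<in> X \<Longrightarrow> \<bar>f y\<bar> \<le> M"
  using compact_imp_bounded[OF compact_continuous_image[OF assms(2,1)]]
  by (auto simp: bounded_iff)

lemma supball_ge:
  assumes "compact X" "continuous_on X (\<phi> n)" "x \<in> X"
  shows "\<phi> n x \<le> supball X T \<phi> n x eps"
proof -
  obtain M where "\<And>y. y \<in> X \<Longrightarrow> \<bar>\<phi> n y\<bar> \<le> M"
    using bdd_on_compact[OF assms(1,2)] by blast
  then have "bdd_above (\<phi> n ` nbowen X T n x eps)"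
    using nbowen_subset by (intro bdd_aboveI[of _ M]) force
  then show ?thesis
    unfolding supball_def using center_in_nbowen[OF assms(3)] by (rule cSUP_upper2) simp
qed

lemma supball_le_distortion:
  assumes "compact X" "continuous_on X (\<phi> n)" "x \<in> X"
  shows "supball X T \<phi> n x eps \<le> \<phi> n x + distortion X T \<phi> n eps"
proof -
  obtain M where M: "\<And>y. y \<in> X \<Longrightarrow> \<bar>\<phi> n y\<bar> \<le> M"
    using bdd_on_compact[OF assms(1,2)] by blast
  have osc_le: "\<bar>\<phi> n x' - \<phi> n y\<bar> \<le> 2 * M" if "x' \<in> X" "y \<in> nbowen X T n x' eps" for x' y
    using M[OF that(1)] M[of y] that(2) nbowen_subset by fastforce
  have inner_bdd: "bdd_above ((\<lambda>y. \<bar>\<phi> n x' - \<phi> n y\<bar>) ` nbowen X T n x' eps)" if "x' \<in> X" for x'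
    using osc_le[OF that] by (intro bdd_aboveI[of _ "2 * M"]) blast
  have "(SUP y\<in>nbowen X T n x' eps. \<bar>\<phi> n x' - \<phi> n y\<bar>) \<le> 2 * M" if "x' \<in> X" for x'
    using center_in_nbowen[OF that, of T n eps] osc_le[OF that] by (intro cSUP_least) auto
  then have outer_bdd: "bdd_above ((\<lambda>x'. SUP y\<in>nbowen X T n x' eps. \<bar>\<phi> n x' - \<phi> n y\<bar>) ` X)"
    by (intro bdd_aboveI[of _ "2 * M"]) blast
  have "\<phi> n y - \<phi> n x \<le> distortion X T \<phi> n eps" if "y \<in> nbowen X T n x eps" for y
  proof -
    have "\<phi> n y - \<phi> n x \<le> (SUP y\<in>nbowen X T n x eps. \<bar>\<phi> n x - \<phi> n y\<bar>)"
      using that inner_bdd[OF assms(3)] by (intro cSUP_upper2) auto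
    also have "\<dots> \<le> distortion X T \<phi> n eps"
      unfolding distortion_def using assms(3) outer_bdd by (rule cSUP_upper)
    finally show ?thesis .
  qed
  then show ?thesis
    unfolding supball_def using center_in_nbowen[OF assms(3), of T n eps]
    by (intro cSUP_least) (auto simp: algebra_simps)
qed

definition nbowen_covers :: "'a::metric_space set \<Rightarrow> ('a \<Rightarrow> 'a) \<Rightarrow> 'a set \<Rightarrow> nat \<Rightarrow> real \<Rightarrow> (nat set \<times> (nat \<Rightarrow> 'a) \<times> (nat \<Rightarrow> nat)) set" where
  "nbowen_covers X T Z N eps =
    {(I, x, n). (\<forall>i\<in>I. x i \<in> X \<and> N \<le> n i) \<and> Z \<subseteq> (\<Union>i\<in>I. nbowen X T (n i) (x i) eps)}"

definition weighted_nbowen_covers :: "'a::metric_space set \<Rightarrow> ('a \<Rightarrow> 'a) \<Rightarrow> 'a set \<Rightarrow> nat \<Rightarrow> real \<Rightarrow> (nat set \<times> (nat \<Rightarrow> 'a) \<times> (nat \<Rightarrow> nat) \<times> (nat \<Rightarrow> real)) set" where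
  "weighted_nbowen_covers X T Z N eps =
    {(I, x, n, c). (\<forall>i\<in>I. x i \<in> X \<and> N \<le> n i \<and> 0 < c i) \<and>
       (\<forall>z\<in>X. (if z \<in> Z then 1 else 0) \<le>
          (\<Sum>i. if i \<in> I \<and> z \<in> nbowen X T (n i) (x i) eps then ennreal (c i) else 0))}"

lemma Mcov_eq_INF_covers:
  "Mcov X T \<phi> Z s N eps = (INF (I, x, n)\<in>nbowen_covers X T Z N eps.
     \<Sum>i. if i \<in> I then ennreal (exp (- real (n i) * s + supball X T \<phi> (n i) (x i) eps)) else 0)"
  unfolding Mcov_def nbowen_covers_def ..

lemma Mcalcov_eq_INF_covers:
  "Mcalcov X T \<phi> Z s N eps = (INF (I, x, n)\<in>nbowen_covers X T Z N eps.
     \<Sum>i. if i \<in> I then ennreal (exp (- real (n i) * s + \<phi> (n i) (x i))) else 0)"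
  unfolding Mcalcov_def nbowen_covers_def ..

lemma Wcov_eq_INF_weighted_covers:
  "Wcov X T \<phi> Z s N eps = (INF (I, x, n, c)\<in>weighted_nbowen_covers X T Z N eps.
     \<Sum>i. if i \<in> I then ennreal (c i) * ennreal (exp (- real (n i) * s + supball X T \<phi> (n i) (x i) eps)) else 0)"
  unfolding Wcov_def weighted_nbowen_covers_def ..

lemma nbowen_covers_antimono_N: "N \<le> N' \<Longrightarrow> nbowen_covers X T Z N' eps \<subseteq> nbowen_covers X T Z N eps"
  by (auto simp: nbowen_covers_def)

lemma weighted_nbowen_covers_antimono_N:
  "N \<le> N' \<Longrightarrow> weighted_nbowen_covers X T Z N' eps \<subseteq> weighted_nbowen_covers X T Z N eps"
  by (auto simp: weighted_nbowen_covers_def)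

lemma nbowen_covers_antimono_eps: "eps' \<le> eps \<Longrightarrow> nbowen_covers X T Z N eps \<subseteq> nbowen_covers X T Z N eps'"
  unfolding nbowen_covers_def using nbowen_antimono_eps by fastforce

lemma incseq_Mcov: "incseq (\<lambda>N. Mcov X T \<phi> Z s N eps)"
  unfolding incseq_def Mcov_eq_INF_covers
  by (intro allI impI INF_superset_mono nbowen_covers_antimono_N) auto

lemma incseq_Mcalcov: "incseq (\<lambda>N. Mcalcov X T \<phi> Z s N eps)"
  unfolding incseq_def Mcalcov_eq_INF_covers
  by (intro allI impI INF_superset_mono nbowen_covers_antimono_N) auto

lemma incseq_Wcov: "incseq (\<lambda>N. Wcov X T \<phi> Z s N eps)"
  unfolding incseq_def Wcov_eq_INF_weighted_covers
  by (intro allI impI INF_superset_mono weighted_nbowen_covers_antimono_N) auto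

lemma Mcalcov_antimono_eps: "eps' \<le> eps \<Longrightarrow> Mcalcov X T \<phi> Z s N eps' \<le> Mcalcov X T \<phi> Z s N eps"
  unfolding Mcalcov_eq_INF_covers by (intro INF_superset_mono nbowen_covers_antimono_eps) auto

lemma suminf_if_ennreal_mono:
  "(\<And>i. i \<in> I \<Longrightarrow> f i \<le> g i) \<Longrightarrow>
    (\<Sum>i. if i \<in> I then ennreal (f i) else 0) \<le> (\<Sum>i. if i \<in> I then ennreal (g i) else 0)"
  by (intro suminf_le summableI) (auto intro: ennreal_leI)

lemma Mcalcov_antimono_s:
  assumes "s \<le> s'"
  shows "Mcalcov X T \<phi> Z s' N eps \<le> Mcalcov X T \<phi> Z s N eps"
  unfolding Mcalcov_eq_INF_covers
proof (rule INF_mono', clarify)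
  fix I x n
  show "(\<Sum>i. if i \<in> I then ennreal (exp (- real (n i) * s' + \<phi> (n i) (x i))) else 0)
      \<le> (\<Sum>i. if i \<in> I then ennreal (exp (- real (n i) * s + \<phi> (n i) (x i))) else 0)"
    using assms by (intro suminf_if_ennreal_mono) (simp add: mult_left_mono)
qed

lemma Mcalcov_le_Mcov:
  assumes "compact X" "\<And>n. continuous_on X (\<phi> n)"
  shows "Mcalcov X T \<phi> Z s N eps \<le> Mcov X T \<phi> Z s N eps"
  unfolding Mcalcov_eq_INF_covers Mcov_eq_INF_covers
proof (rule INF_superset_mono[OF order_refl], clarify)
  fix I x n assume "(I, x, n) \<in> nbowen_covers X T Z N eps"
  then have "x i \<in> X" if "i \<in> I" for i
    using that by (auto simp: nbowen_covers_def)
  then show "(\<Sum>i. if i \<in> I then ennreal (exp (- real (n i) * s + \<phi> (n i) (x i))) else 0)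
      \<le> (\<Sum>i. if i \<in> I then ennreal (exp (- real (n i) * s + supball X T \<phi> (n i) (x i) eps)) else 0)"
    using supball_ge[where \<phi> = \<phi>, OF assms] by (intro suminf_if_ennreal_mono) simp
qed

lemma Mcov_le_Mcalcov_add:
  assumes "compact X" "\<And>n. continuous_on X (\<phi> n)"
    and "\<And>k. N \<le> k \<Longrightarrow> distortion X T \<phi> k eps \<le> real k * \<delta>"
  shows "Mcov X T \<phi> Z (s + \<delta>) N eps \<le> Mcalcov X T \<phi> Z s N eps"
  unfolding Mcalcov_eq_INF_covers Mcov_eq_INF_covers
proof (rule INF_superset_mono[OF order_refl], clarify)
  fix I x n assume "(I, x, n) \<in> nbowen_covers X T Z N eps"
  then have fam: "x i \<in> X" "N \<le> n i" if "i \<in> I" for i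
    using that by (auto simp: nbowen_covers_def)
  have "- real (n i) * (s + \<delta>) + supball X T \<phi> (n i) (x i) eps \<le> - real (n i) * s + \<phi> (n i) (x i)"
    if "i \<in> I" for i
    using supball_le_distortion[where \<phi> = \<phi> and n = "n i" and T = T and eps = eps, OF assms(1,2) fam(1)[OF that]] assms(3)[OF fam(2)[OF that]]
    by (simp add: algebra_simps)
  then show "(\<Sum>i. if i \<in> I then ennreal (exp (- real (n i) * (s + \<delta>) + supball X T \<phi> (n i) (x i) eps)) else 0)
      \<le> (\<Sum>i. if i \<in> I then ennreal (exp (- real (n i) * s + \<phi> (n i) (x i))) else 0)"
    by (intro suminf_if_ennreal_mono) simp
qed

lemma Wcov_le_Mcov: "Wcov X T \<phi> Z s N eps \<le> Mcov X T \<phi> Z s N eps"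
  unfolding Wcov_eq_INF_weighted_covers Mcov_eq_INF_covers
proof (rule INF_mono)
  fix p assume p: "p \<in> nbowen_covers X T Z N eps"
  obtain I x n where p_eq: "p = (I, x, n)"
    by (cases p)
  have "1 \<le> (\<Sum>i. if i \<in> I \<and> z \<in> nbowen X T (n i) (x i) eps then ennreal 1 else 0)" if z: "z \<in> Z" for z
  proof -
    obtain i where "i \<in> I" "z \<in> nbowen X T (n i) (x i) eps"
      using p z unfolding p_eq nbowen_covers_def by auto
    then have "(\<Sum>j\<in>{i}. if j \<in> I \<and> z \<in> nbowen X T (n j) (x j) eps then ennreal 1 else 0) = 1"
      by simp
    moreover have "(\<Sum>j\<in>{i}. if j \<in> I \<and> z \<in> nbowen X T (n j) (x j) eps then ennreal 1 else 0)
        \<le> (\<Sum>j. if j \<in> I \<and> z \<in> nbowen X T (n j) (x j) eps then ennreal 1 else 0)"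
      by (rule sum_le_suminf) auto
    ultimately show ?thesis
      by simp
  qed
  then have "(I, x, n, \<lambda>_. 1) \<in> weighted_nbowen_covers X T Z N eps"
    using p p_eq by (auto simp: nbowen_covers_def weighted_nbowen_covers_def)
  then show "\<exists>q\<in>weighted_nbowen_covers X T Z N eps.
      (case q of (I, x, n, c) \<Rightarrow> \<Sum>i. if i \<in> I then ennreal (c i) * ennreal (exp (- real (n i) * s + supball X T \<phi> (n i) (x i) eps)) else 0)
      \<le> (case p of (I, x, n) \<Rightarrow> \<Sum>i. if i \<in> I then ennreal (exp (- real (n i) * s + supball X T \<phi> (n i) (x i) eps)) else 0)"
    using p_eq by (intro bexI) (simp_all cong: if_cong)
qed

lemma Mcalcov_le_INF_subcovers:
  assumes "\<And>i. i \<in> I \<Longrightarrow> x i \<in> X" "\<And>i. i \<in> I \<Longrightarrow> N \<le> n i"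
  shows "Mcalcov X T \<phi> Z s N eps
    \<le> (INF J\<in>{J. J \<subseteq> I \<and> Z \<subseteq> (\<Union>j\<in>J. nbowen X T (n j) (x j) eps)}.
         \<Sum>i. if i \<in> J then ennreal (exp (- real (n i) * s + \<phi> (n i) (x i))) else 0)"
  unfolding Mcalcov_eq_INF_covers
proof (rule INF_mono)
  fix J assume "J \<in> {J. J \<subseteq> I \<and> Z \<subseteq> (\<Union>j\<in>J. nbowen X T (n j) (x j) eps)}"
  then have "(J, x, n) \<in> nbowen_covers X T Z N eps"
    using assms by (auto simp: nbowen_covers_def)
  then show "\<exists>p\<in>nbowen_covers X T Z N eps.
      (case p of (I, x, n) \<Rightarrow> \<Sum>i. if i \<in> I then ennreal (exp (- real (n i) * s + \<phi> (n i) (x i))) else 0)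
      \<le> (\<Sum>i. if i \<in> J then ennreal (exp (- real (n i) * s + \<phi> (n i) (x i))) else 0)"
    by (intro bexI) auto
qed

lemma Mcalcov_le_Wcov:
  assumes "compact X" "\<And>n. continuous_on X (\<phi> n)" "Z \<subseteq> X"
    and "0 \<le> eps" "2 * ln 3 \<le> real N * eps"
  shows "Mcalcov X T \<phi> Z s N (eps / 2) \<le> Wcov X T \<phi> Z s N eps"
  unfolding Wcov_eq_INF_weighted_covers
proof (rule INF_greatest, clarify)
  fix I x n c assume cover: "(I, x, n, c) \<in> weighted_nbowen_covers X T Z N eps"
  then have fam: "x i \<in> X" "N \<le> n i" "0 < c i" if "i \<in> I" for i
    using that by (auto simp: weighted_nbowen_covers_def)
  have weight: "1 \<le> (\<Sum>i. if i \<in> I \<and> z \<in> nbowen X T (n i) (x i) eps then ennreal (c i) else 0)"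
    if "z \<in> Z" for z
    using cover that assms(3) unfolding weighted_nbowen_covers_def by fastforce
  define w where "w i = exp (- real (n i) * s + \<phi> (n i) (x i))" for i
  have enlarge: "nbowen X T (n i) (x i) eps \<subseteq> nbowen X T (n j) (x j) (eps / 2)"
    if "i \<in> I" "j \<in> I" "n j \<le> n i" "nbowen X T (n i) (x i) eps \<inter> nbowen X T (n j) (x j) eps \<noteq> {}"
    for i j
  proof (rule nbowen_subset_half[OF assms(4) _ that(3,4)])
    show "2 * ln 3 \<le> real (n j) * eps"
      using assms(4,5) fam(2)[OF that(2)] by (meson mult_right_mono of_nat_le_iff order_trans)
  qed
  have "Mcalcov X T \<phi> Z s N (eps / 2)
      \<le> (INF J\<in>{J. J \<subseteq> I \<and> Z \<subseteq> (\<Union>j\<in>J. nbowen X T (n j) (x j) (eps / 2))}. \<Sum>i. if i \<in> J then ennreal (w i) else 0)"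
    unfolding w_def using fam(1,2) by (rule Mcalcov_le_INF_subcovers)
  also have "\<dots> \<le> (\<Sum>i. if i \<in> I then ennreal (c i * w i) else 0)"
    by (rule countable_weighted_vitali[where lev = n, OF enlarge _ _ weight]) (auto simp: w_def fam(3) less_imp_le)
  also have "\<dots> \<le> (\<Sum>i. if i \<in> I then ennreal (c i) * ennreal (exp (- real (n i) * s + supball X T \<phi> (n i) (x i) eps)) else 0)"
  proof (intro suminf_le summableI)
    fix i
    show "(if i \<in> I then ennreal (c i * w i) else 0)
        \<le> (if i \<in> I then ennreal (c i) * ennreal (exp (- real (n i) * s + supball X T \<phi> (n i) (x i) eps)) else 0)"
    proof (cases "i \<in> I")
      case True
      have "ennreal (c i * w i) = ennreal (c i) * ennreal (w i)"
        using fam(3)[OF True] by (simp add: ennreal_mult w_def)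
      also have "\<dots> \<le> ennreal (c i) * ennreal (exp (- real (n i) * s + supball X T \<phi> (n i) (x i) eps))"
        using supball_ge[where \<phi> = \<phi>, OF assms(1,2) fam(1)[OF True]]
        by (intro mult_left_mono ennreal_leI) (auto simp: w_def)
      finally show ?thesis
        using True by simp
    qed simp
  qed
  finally show "Mcalcov X T \<phi> Z s N (eps / 2) \<le> (\<Sum>i. if i \<in> I then ennreal (c i) * ennreal (exp (- real (n i) * s + supball X T \<phi> (n i) (x i) eps)) else 0)" .
qed

definition zero_threshold :: "(real \<Rightarrow> ennreal) \<Rightarrow> ereal" where
  "zero_threshold F = Inf {ereal s | s. F s = 0}"

lemma Mcrit_eq_zero_threshold: "Mcrit X T \<phi> Z eps = zero_threshold (\<lambda>s. Mlim X T \<phi> Z s eps)"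
  unfolding Mcrit_def zero_threshold_def ..

lemma Wcrit_eq_zero_threshold: "Wcrit X T \<phi> Z eps = zero_threshold (\<lambda>s. Wlim X T \<phi> Z s eps)"
  unfolding Wcrit_def zero_threshold_def ..

lemma zero_threshold_mono:
  assumes "\<And>s. F s \<le> G s"
  shows "zero_threshold F \<le> zero_threshold G"
  unfolding zero_threshold_def
proof (rule Inf_superset_mono, clarify)
  fix s assume "G s = 0"
  then have "F s = 0"
    using assms[of s] by simp
  then show "\<exists>s'. ereal s = ereal s' \<and> F s' = 0"
    by blast
qed

lemma zero_threshold_le_add:
  assumes "\<And>s. F (s + \<delta>) \<le> G s"
  shows "zero_threshold F \<le> zero_threshold G + ereal \<delta>"
proof -
  have "zero_threshold F - ereal \<delta> \<le> zero_threshold G"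
    unfolding zero_threshold_def[of G]
  proof (rule Inf_greatest, clarify)
    fix s assume "G s = 0"
    then have "F (s + \<delta>) = 0"
      using assms[of s] by simp
    then have "zero_threshold F \<le> ereal (s + \<delta>)"
      unfolding zero_threshold_def by (intro Inf_lower) blast
    then show "zero_threshold F - ereal \<delta> \<le> ereal s"
      by (simp add: ereal_minus_le)
  qed
  then show ?thesis
    by (simp add: ereal_minus_le)
qed

lemma lim_mono_incseq:
  fixes a b :: "nat \<Rightarrow> 'a::{complete_linorder, linorder_topology}"
  assumes "incseq a" "incseq b" "eventually (\<lambda>n. a n \<le> b n) sequentially"
  shows "lim a \<le> lim b"
proof -
  have "a \<longlonglongrightarrow> lim a" "b \<longlonglongrightarrow> lim b"
    using LIMSEQ_SUP[OF assms(1)] LIMSEQ_SUP[OF assms(2)] by (metis limI)+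
  then show ?thesis
    using assms(3) unfolding eventually_sequentially by (intro LIMSEQ_le) auto
qed

lemma eventually_le_real_mult:
  fixes c eps :: real
  assumes "0 < eps"
  shows "eventually (\<lambda>N. c \<le> real N * eps) sequentially"
proof -
  obtain n where n: "c / eps \<le> real n"
    using real_arch_simple by blast
  have "eventually (\<lambda>N. n \<le> N) sequentially"
    by (rule eventually_ge_at_top)
  then show ?thesis
  proof eventually_elim
    case (elim N)
    then have "c / eps \<le> real N"
      using n by linarith
    then show ?case
      using assms by (simp add: pos_divide_le_eq)
  qed
qed

definition Mcallim :: "'a::metric_space set \<Rightarrow> ('a \<Rightarrow> 'a) \<Rightarrow> (nat \<Rightarrow> 'a \<Rightarrow> real) \<Rightarrow> 'a set \<Rightarrow> real \<Rightarrow> real \<Rightarrow> ennreal" where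
  "Mcallim X T \<phi> Z s eps = lim (\<lambda>N. Mcalcov X T \<phi> Z s N eps)"

definition Mcalcrit :: "'a::metric_space set \<Rightarrow> ('a \<Rightarrow> 'a) \<Rightarrow> (nat \<Rightarrow> 'a \<Rightarrow> real) \<Rightarrow> 'a set \<Rightarrow> real \<Rightarrow> ereal" where
  "Mcalcrit X T \<phi> Z eps = zero_threshold (\<lambda>s. Mcallim X T \<phi> Z s eps)"

lemma Mcalcrit_mono: "eps' \<le> eps \<Longrightarrow> Mcalcrit X T \<phi> Z eps' \<le> Mcalcrit X T \<phi> Z eps"
  unfolding Mcalcrit_def Mcallim_def
  by (intro zero_threshold_mono lim_mono_incseq incseq_Mcalcov always_eventually allI Mcalcov_antimono_eps)

lemma Mcalcrit_le_Mcrit: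
  assumes "compact X" "\<And>n. continuous_on X (\<phi> n)"
  shows "Mcalcrit X T \<phi> Z eps \<le> Mcrit X T \<phi> Z eps"
  unfolding Mcalcrit_def Mcallim_def Mcrit_eq_zero_threshold Mlim_def
  by (intro zero_threshold_mono lim_mono_incseq incseq_Mcalcov incseq_Mcov always_eventually allI
      Mcalcov_le_Mcov[OF assms])

lemma Wcrit_le_Mcrit: "Wcrit X T \<phi> Z eps \<le> Mcrit X T \<phi> Z eps"
  unfolding Wcrit_eq_zero_threshold Mcrit_eq_zero_threshold Wlim_def Mlim_def
  by (intro zero_threshold_mono lim_mono_incseq incseq_Wcov incseq_Mcov always_eventually allI Wcov_le_Mcov)

lemma Mcalcrit_half_le_Wcrit:
  assumes "compact X" "\<And>n. continuous_on X (\<phi> n)" "Z \<subseteq> X" "0 < eps"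
  shows "Mcalcrit X T \<phi> Z (eps / 2) \<le> Wcrit X T \<phi> Z eps"
  unfolding Mcalcrit_def Mcallim_def Wcrit_eq_zero_threshold Wlim_def
proof (intro zero_threshold_mono lim_mono_incseq incseq_Mcalcov incseq_Wcov)
  show "eventually (\<lambda>N. Mcalcov X T \<phi> Z s N (eps / 2) \<le> Wcov X T \<phi> Z s N eps) sequentially" for s
    using eventually_le_real_mult[OF assms(4), of "2 * ln 3"]
    by eventually_elim (use assms in \<open>simp add: Mcalcov_le_Wcov\<close>)
qed

lemma Mcrit_le_Mcalcrit_add:
  assumes "compact X" "\<And>n. continuous_on X (\<phi> n)"
    and "eventually (\<lambda>k. distortion X T \<phi> k eps \<le> real k * \<delta>) sequentially"
  shows "Mcrit X T \<phi> Z eps \<le> Mcalcrit X T \<phi> Z eps + ereal \<delta>"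
  unfolding Mcalcrit_def Mcallim_def Mcrit_eq_zero_threshold Mlim_def
proof (intro zero_threshold_le_add lim_mono_incseq incseq_Mcov incseq_Mcalcov)
  obtain N1 where N1: "\<And>k. N1 \<le> k \<Longrightarrow> distortion X T \<phi> k eps \<le> real k * \<delta>"
    using assms(3) unfolding eventually_sequentially by blast
  show "eventually (\<lambda>N. Mcov X T \<phi> Z (s + \<delta>) N eps \<le> Mcalcov X T \<phi> Z s N eps) sequentially" for s
    using eventually_ge_at_top[of N1]
    by eventually_elim (use N1 in \<open>auto intro: Mcov_le_Mcalcov_add[OF assms(1,2)]\<close>)
qed

lemma eventually_le_mult_of_limsup:
  fixes a :: "nat \<Rightarrow> real \<Rightarrow> real"
  assumes "((\<lambda>e. limsup (\<lambda>n. ereal (a n e / real n))) \<longlongrightarrow> 0) (at_right 0)" "0 < \<delta>"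
  shows "eventually (\<lambda>e. eventually (\<lambda>n. a n e \<le> real n * \<delta>) sequentially) (at_right 0)"
proof -
  have "eventually (\<lambda>e. limsup (\<lambda>n. ereal (a n e / real n)) < ereal \<delta>) (at_right 0)"
    using order_tendstoD(2)[OF assms(1)] assms(2) by simp
  then show ?thesis
  proof eventually_elim
    case (elim e)
    then have "eventually (\<lambda>n. ereal (a n e / real n) < ereal \<delta>) sequentially"
      by (rule Limsup_lessD)
    then show ?case
      using eventually_gt_at_top[of 0]
      by eventually_elim (auto simp: pos_divide_less_eq mult.commute intro: less_imp_le)
  qed
qed

lemma tendsto_ereal_squeeze_add:
  fixes f g :: "'a \<Rightarrow> ereal"
  assumes g: "(g \<longlongrightarrow> L) F" and lower: "eventually (\<lambda>x. L \<le> f x) F"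
    and upper: "\<And>\<delta>. 0 < \<delta> \<Longrightarrow> eventually (\<lambda>x. f x \<le> g x + ereal \<delta>) F"
  shows "(f \<longlongrightarrow> L) F"
proof (rule order_tendstoI)
  fix a assume "a < L"
  from lower show "eventually (\<lambda>x. a < f x) F"
    by eventually_elim (use \<open>a < L\<close> in \<open>rule less_le_trans\<close>)
next
  fix a assume "L < a"
  then obtain b where b: "L < ereal b" "ereal b < a"
    using ereal_dense2 by blast
  obtain d where "ereal b < ereal d" and d_a: "ereal d < a"
    using ereal_dense2[OF b(2)] by blast
  then have b_d: "b < d"
    by simp
  have "eventually (\<lambda>x. g x < ereal b) F"
    using order_tendstoD(2)[OF g b(1)] .
  moreover have "eventually (\<lambda>x. f x \<le> g x + ereal (d - b)) F"
    using upper b_d by simp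
  ultimately show "eventually (\<lambda>x. f x < a) F"
  proof eventually_elim
    case (elim x)
    then have "g x + ereal (d - b) < ereal d"
      by (cases "g x") auto
    then show ?case
      using elim(2) d_a by (meson le_less_trans less_trans)
  qed
qed

lemma PB_eq_PWB:
  assumes "compact X" "\<And>n. continuous_on X (\<phi> n)" "Z \<subseteq> X"
    and tempered: "((\<lambda>eps. limsup (\<lambda>n. ereal (distortion X T \<phi> n eps / real n))) \<longlongrightarrow> 0) (at_right 0)"
  shows "PB X T \<phi> Z = PWB X T \<phi> Z"
proof -
  define L where "L = Inf (Mcalcrit X T \<phi> Z ` {0<..})"
  have lim_Mcalcrit: "(Mcalcrit X T \<phi> Z \<longlongrightarrow> L) (at_right 0)"
    using Lim_right_bound[of UNIV 0 "Mcalcrit X T \<phi> Z" bot] by (simp add: L_def Mcalcrit_mono)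
  have L_le: "L \<le> Mcalcrit X T \<phi> Z eps" if "0 < eps" for eps
    using that by (simp add: L_def INF_lower)
  have lim_Mcrit: "(Mcrit X T \<phi> Z \<longlongrightarrow> L) (at_right 0)"
  proof (rule tendsto_ereal_squeeze_add[OF lim_Mcalcrit])
    show "\<forall>\<^sub>F eps in at_right 0. L \<le> Mcrit X T \<phi> Z eps"
      using eventually_at_right_less[of 0]
    proof eventually_elim
      case (elim eps)
      show ?case
        using L_le[OF elim] Mcalcrit_le_Mcrit[OF assms(1,2)] by (rule order_trans)
    qed
    show "\<forall>\<^sub>F eps in at_right 0. Mcrit X T \<phi> Z eps \<le> Mcalcrit X T \<phi> Z eps + ereal \<delta>" if "0 < \<delta>" for \<delta>
      using eventually_le_mult_of_limsup[OF tempered that]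
      by eventually_elim (rule Mcrit_le_Mcalcrit_add[OF assms(1,2)])
  qed
  have lim_Wcrit: "(Wcrit X T \<phi> Z \<longlongrightarrow> L) (at_right 0)"
  proof (rule tendsto_sandwich[OF _ _ tendsto_const lim_Mcrit])
    show "\<forall>\<^sub>F eps in at_right 0. L \<le> Wcrit X T \<phi> Z eps"
      using eventually_at_right_less[of 0]
    proof eventually_elim
      case (elim eps)
      then have "L \<le> Mcalcrit X T \<phi> Z (eps / 2)"
        by (intro L_le) simp
      then show ?case
        using Mcalcrit_half_le_Wcrit[OF assms(1-3) elim] by (rule order_trans)
    qed
  qed (simp add: Wcrit_le_Mcrit)
  show ?thesis
    unfolding PB_def PWB_def
    using tendsto_Lim[OF trivial_limit_at_right_real lim_Mcrit]
      tendsto_Lim[OF trivial_limit_at_right_real lim_Wcrit] by simp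
qed

theorem mainTheorem3:
  fixes X Z :: "'a::metric_space set" and T :: "'a \<Rightarrow> 'a" and \<phi> :: "nat \<Rightarrow> 'a \<Rightarrow> real"
  assumes "compact X"
    and "continuous_on X T" and "T ` X \<subseteq> X"
    and "Z \<subseteq> X" and "Z \<noteq> {}"
    and "\<And>n. continuous_on X (\<phi> n)"
    and "((\<lambda>eps. limsup (\<lambda>n. ereal (distortion X T \<phi> n eps / real n))) \<longlongrightarrow> 0) (at_right 0)"
  shows "(\<forall>\<theta>>0. \<exists>eps0>0. \<forall>eps. 0 < eps \<and> eps < eps0 \<longrightarrow>
            (\<exists>N0. \<forall>N\<ge>N0. \<forall>s.
               Mcalcov X T \<phi> Z (s + \<theta>) N (eps / 2) \<le> Wcov X T \<phi> Z s N eps \<and>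
               Wcov X T \<phi> Z s N eps \<le> Mcov X T \<phi> Z s N eps))
         \<and> PB X T \<phi> Z = PWB X T \<phi> Z"
proof -
  have "\<exists>N0. \<forall>N\<ge>N0. \<forall>s. Mcalcov X T \<phi> Z (s + \<theta>) N (eps / 2) \<le> Wcov X T \<phi> Z s N eps \<and>
      Wcov X T \<phi> Z s N eps \<le> Mcov X T \<phi> Z s N eps"
    if "0 < \<theta>" "0 < eps" for \<theta> eps :: real
  proof -
    obtain N0 where N0: "\<And>N. N0 \<le> N \<Longrightarrow> 2 * ln 3 \<le> real N * eps"
      using eventually_le_real_mult[OF \<open>0 < eps\<close>] unfolding eventually_sequentially by blast
    have "Mcalcov X T \<phi> Z (s + \<theta>) N (eps / 2) \<le> Wcov X T \<phi> Z s N eps" if "N0 \<le> N" for N s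
    proof -
      have "Mcalcov X T \<phi> Z (s + \<theta>) N (eps / 2) \<le> Mcalcov X T \<phi> Z s N (eps / 2)"
        using \<open>0 < \<theta>\<close> by (intro Mcalcov_antimono_s) simp
      also have "\<dots> \<le> Wcov X T \<phi> Z s N eps"
        using \<open>0 < eps\<close> N0[OF that] by (intro Mcalcov_le_Wcov[OF assms(1,6,4)]) auto
      finally show ?thesis .
    qed
    then show ?thesis
      using Wcov_le_Mcov by blast
  qed
  then show ?thesis
    using PB_eq_PWB[OF assms(1,6,4,7)] by (intro conjI allI impI exI[of _ "1::real"]) auto
qed

end
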